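(* Consider the problem of minimizing $\Phi(x_1,x_2):=\theta_1(x_1)+h(x_1,x_2)+\theta_2(x_2)$ with $h=h^+-h^-$, and let $\{(x_1^k,x_2^k)\}_{k\in\mathbb{N}}$ be a sequence generated by the inertial Bregman alternating linearized minimization algorithm described in the context, under Assumptions A1, A2 and A3 stated in the context (with the constants $\varepsilon,\delta_1,\delta_2$ defined there). Set $w_1^k=(x_1^k,x_2^k)$, $w_2^k=(x_1^{k-1},x_2^{k-1})$ and $\mathbf{w}^k=(w_1^k,w_2^k)$. Then the sequence $\{\Theta_{\delta_1,\delta_2}(\mathbf{w}^k)\}_{k\in\mathbb{N}}$ is nonincreasing; in particular, for all $k\in\mathbb{N}$, $$\Theta_{\delta_1,\delta_2}(\mathbf{w}^{k+1})-\Theta_{\delta_1,\delta_2}(\mathbf{w}^k)\le -\delta\,\|\mathbf{w}^{k+1}-\mathbf{w}^k\|^2,$$ where $\delta=\frac{\varepsilon}{2}\min\{\delta_1,\delta_2\}>0$.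
   Context: Let $n_1,n_2\ge 1$. Let $\theta_1:\mathbb{R}^{n_1}\to(-\infty,+\infty]$, $\theta_2:\mathbb{R}^{n_2}\to(-\infty,+\infty]$, and let $h^+,h^-:\mathbb{R}^{n_1}\times\mathbb{R}^{n_2}\to\mathbb{R}$ be continuously differentiable, $h=h^+-h^-$, $\Phi(x_1,x_2)=\theta_1(x_1)+h(x_1,x_2)+\theta_2(x_2)$. Bregman distance: for a strongly convex, continuously differentiable $\psi$, $D_\psi(x,y)=\psi(x)-\psi(y)-\langle\nabla\psi(y),x-y\rangle$. For a function $g$, $\mu>0$ and a kernel $\psi$, define $\mathcal{P}^{\psi}_{g,\mu}(u;v):=\arg\min_x\{g(x)+\langle x,v\rangle+\mu D_\psi(x,u)\}$. For each $k\in\mathbb{N}$, $\psi_k:\mathbb{R}^{n_1}\to\mathbb{R}$ and $\varphi_k:\mathbb{R}^{n_2}\to\mathbb{R}$ are strongly convex continuously differentiable kernels whose strong convexity moduli are at least $\rho_1>0$ and $\rho_2>0$ respectively (over all $k$). Algorithm: choose parameters $\alpha_i^k,\beta_i^k,\tau_i^k$ ($i=1,2$), an initial point $x^0=(x_1^0,x_2^0)$, and set $x^{-1}:=x^0$. For $k=0,1,2,\dots$: $y_1^k=x_1^k+\alpha_1^k(x_1^k-x_1^{k-1})$, $z_1^k=x_1^k+\beta_1^k(x_1^k-x_1^{k-1})$, $x_1^{k+1}\in\mathcal{P}^{\psi_k}_{\theta_1+h^+(\cdot,x_2^k),\tau_1^k}(x_1^k;t_1^k)$ with $t_1^k=-\nabla_{x_1}h^-(z_1^k,x_2^k)-\tau_1^k(y_1^k-x_1^k)$;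 $y_2^k=x_2^k+\alpha_2^k(x_2^k-x_2^{k-1})$, $z_2^k=x_2^k+\beta_2^k(x_2^k-x_2^{k-1})$, $x_2^{k+1}\in\mathcal{P}^{\varphi_k}_{\theta_2+h^+(x_1^{k+1},\cdot),\tau_2^k}(x_2^k;t_2^k)$ with $t_2^k=-\nabla_{x_2}h^-(x_1^{k+1},z_2^k)-\tau_2^k(y_2^k-x_2^k)$. Assumption A1: $\theta_1,\theta_2$ are proper lower semicontinuous, and $\Phi$ is bounded from below. Assumption A2: (i) for every fixed $x_2$, $\nabla_{x_1}h^-(\cdot,x_2)$ is globally Lipschitz with modulus $L_1^-(x_2)$; for every fixed $x_1$, $\nabla_{x_2}h^-(x_1,\cdot)$ is globally Lipschitz with modulus $L_2^-(x_1)$. (ii) There exist $\lambda_i^-,\lambda_i^+>0$ ($i=1,2$) with $\inf_k L_1^-(x_2^k)\ge\lambda_1^-$, $\inf_k L_2^-(x_1^k)\ge\lambda_2^-$, $\sup_k L_1^-(x_2^k)\le\lambda_1^+$, $\sup_k L_2^-(x_1^k)\le\lambda_2^+$. (iii) $h$ is continuously differentiable and $\nabla h=\nabla h^+-\nabla h^-$ is Lipschitz continuous on bounded subsets of $\mathbb{R}^{n_1}\times\mathbb{R}^{n_2}$. Assumption A3: for a fixed $\varepsilon>0$: (i) there exist $0<\bar\alpha_i<\frac{(1-\varepsilon)\rho_i}{2}$ with $\alpha_i^k\in[0,\bar\alpha_i]$, and $\bar\beta_i>0$ with $\beta_i^k\in[0,\bar\beta_i]$, $i=1,2$, for all $k$;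 (ii) $\tau_1^k=\frac{(1+\varepsilon)\delta_1+(1+\beta_1^k)L_1^-(x_2^k)}{\rho_1-\alpha_1^k}$, $\tau_2^k=\frac{(1+\varepsilon)\delta_2+(1+\beta_2^k)L_2^-(x_1^{k+1})}{\rho_2-\alpha_2^k}$, where $\delta_1=\frac{\bar\alpha_1+\bar\beta_1\rho_1}{(1-\varepsilon)\rho_1-2\bar\alpha_1}\lambda_1^+$ and $\delta_2=\frac{\bar\alpha_2+\bar\beta_2\rho_2}{(1-\varepsilon)\rho_2-2\bar\alpha_2}\lambda_2^+$. Auxiliary function: for $\mathbf{w}=(w_1,w_2)$ with $w_1=(w_{11},w_{12}),w_2=(w_{21},w_{22})\in\mathbb{R}^{n_1}\times\mathbb{R}^{n_2}$, $\Theta_{\delta_1,\delta_2}(\mathbf{w}):=\Phi(w_1)+\frac{\delta_1}{2}\|w_{11}-w_{21}\|^2+\frac{\delta_2}{2}\|w_{12}-w_{22}\|^2$. *)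

theory Defs
  imports "HOL-Analysis.Analysis"
begin

definition C1_with_grad :: "('a::real_inner \<Rightarrow> real) \<Rightarrow> ('a \<Rightarrow> 'a) \<Rightarrow> bool" where
  "C1_with_grad f g \<longleftrightarrow> (\<forall>x. GDERIV f x :> g x) \<and> continuous_on UNIV g"

definition strongly_convex_mod :: "real \<Rightarrow> ('a::real_normed_vector \<Rightarrow> real) \<Rightarrow> bool" where
  "strongly_convex_mod \<rho> f \<longleftrightarrow> convex_on UNIV (\<lambda>x. f x - \<rho> / 2 * (norm x)\<^sup>2)"

definition bregman :: "('a::real_inner \<Rightarrow> real) \<Rightarrow> ('a \<Rightarrow> 'a) \<Rightarrow> 'a \<Rightarrow> 'a \<Rightarrow> real" where
  "bregman \<psi> g\<psi> x y = \<psi> x - \<psi> y - inner (g\<psi> y) (x - y)"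

definition bregman_prox ::
  "('a::real_inner \<Rightarrow> ereal) \<Rightarrow> real \<Rightarrow> ('a \<Rightarrow> real) \<Rightarrow> ('a \<Rightarrow> 'a) \<Rightarrow> 'a \<Rightarrow> 'a \<Rightarrow> 'a set" where
  "bregman_prox g \<mu> \<psi> g\<psi> u v =
     {x. \<forall>y. g x + ereal (inner x v + \<mu> * bregman \<psi> g\<psi> x u)
              \<le> g y + ereal (inner y v + \<mu> * bregman \<psi> g\<psi> y u)}"

definition proper_fun :: "('a \<Rightarrow> ereal) \<Rightarrow> bool" where
  "proper_fun f \<longleftrightarrow> (\<forall>x. f x \<noteq> -\<infinity>) \<and> (\<exists>x. f x \<noteq> \<infinity>)"

definition lsc_fun :: "('a::topological_space \<Rightarrow> ereal) \<Rightarrow> bool" where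
  "lsc_fun f \<longleftrightarrow> (\<forall>x X. X \<longlonglongrightarrow> x \<longrightarrow> f x \<le> liminf (\<lambda>n. f (X n)))"

definition Phi :: "('a \<Rightarrow> ereal) \<Rightarrow> ('b \<Rightarrow> ereal) \<Rightarrow> ('a \<times> 'b \<Rightarrow> real) \<Rightarrow> 'a \<times> 'b \<Rightarrow> ereal" where
  "Phi \<theta>1 \<theta>2 h z = \<theta>1 (fst z) + ereal (h z) + \<theta>2 (snd z)"

definition Theta ::
  "('a::real_normed_vector \<times> 'b::real_normed_vector \<Rightarrow> ereal) \<Rightarrow> real \<Rightarrow> real \<Rightarrow> ('a \<times> 'b) \<times> ('a \<times> 'b) \<Rightarrow> ereal" where
  "Theta \<Phi> \<delta>1 \<delta>2 w = \<Phi> (fst w) +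
     ereal (\<delta>1 / 2 * (norm (fst (fst w) - fst (snd w)))\<^sup>2 + \<delta>2 / 2 * (norm (snd (fst w) - snd (snd w)))\<^sup>2)"

end

(*
  Each block update is a Bregman proximal step on theta_i + h^+ in which h^- is linearized at
  the extrapolated point z_i. Comparing the prox objective at the new iterate with its value at
  the old one, the Bregman distance is bounded below by strong convexity of the kernel, h^- is
  controlled by the descent lemma for its Lipschitz partial gradient, and the two inertial error
  terms are bounded via Cauchy-Schwarz and AM-GM by (L beta + tau alpha)/2 (|d|^2 + |m|^2), where
  d and m are the current and previous steps. For the block objective F = theta_i + h the choice
  of tau and delta_i in A3 makes this F(x+) - F(x) <= -(1+eps) delta_i/2 |d|^2
  + (1-eps) delta_i/2 |m|^2, i.e. a decrease of F + delta_i/2 |current step|^2 by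
  eps delta_i/2 (|d|^2 + |m|^2). Adding the two blocks, whose intermediate values
  h(x1^{k+1}, x2^k) cancel, gives the decrease of Theta.
*)
theory Submission
  imports Defs
begin

lemma C1_with_grad_GDERIV: "C1_with_grad f g \<Longrightarrow> GDERIV f x :> g x"
  by (simp add: C1_with_grad_def)

lemma GDERIV_partial_fst:
  assumes "GDERIV h (u, v) :> D"
  shows "GDERIV (\<lambda>u. h (u, v)) u :> fst D"
proof -
  have "((\<lambda>u. (u, v)) has_derivative (\<lambda>d. (d, 0))) (at u)"
    by (auto intro!: derivative_eq_intros)
  from has_derivative_compose[OF this assms[unfolded gderiv_def]] show ?thesis
    by (cases D) (simp add: gderiv_def o_def inner_commute)
qed

lemma GDERIV_partial_snd:
  assumes "GDERIV h (u, v) :> D"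
  shows "GDERIV (\<lambda>v. h (u, v)) v :> snd D"
proof -
  have "((\<lambda>v. (u, v)) has_derivative (\<lambda>d. (0, d))) (at v)"
    by (auto intro!: derivative_eq_intros)
  from has_derivative_compose[OF this assms[unfolded gderiv_def]] show ?thesis
    by (cases D) (simp add: gderiv_def o_def inner_commute)
qed

lemma DERIV_along_line:
  assumes "GDERIV f (x + s *\<^sub>R d) :> D"
  shows "((\<lambda>t. f (x + t *\<^sub>R d)) has_real_derivative inner d D) (at s)"
proof -
  have "((\<lambda>t. x + t *\<^sub>R d) has_derivative (\<lambda>t. t *\<^sub>R d)) (at s)"
    by (auto intro!: derivative_eq_intros)
  from has_derivative_compose[OF this assms[unfolded gderiv_def]]
  show ?thesis
    by (auto simp: o_def intro: has_derivative_imp_has_field_derivative)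
qed

lemma convex_on_gradient_inequality:
  assumes convex: "convex_on UNIV f" and deriv: "GDERIV f x :> D"
  shows "f x + inner D (y - x) \<le> f y"
proof -
  define \<gamma> where "\<gamma> t = f (x + t *\<^sub>R (y - x))" for t
  have "convex_on UNIV \<gamma>"
  proof (rule convex_onI)
    fix t a b :: real
    assume "0 < t" "t < 1"
    moreover have "x + ((1 - t) * a + t * b) *\<^sub>R (y - x)
        = (1 - t) *\<^sub>R (x + a *\<^sub>R (y - x)) + t *\<^sub>R (x + b *\<^sub>R (y - x))"
      by (simp add: algebra_simps)
    ultimately show "\<gamma> ((1 - t) *\<^sub>R a + t *\<^sub>R b) \<le> (1 - t) * \<gamma> a + t * \<gamma> b"
      using convex_onD[OF convex, of t] by (simp add: \<gamma>_def)
  qed simp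
  moreover have "(\<gamma> has_real_derivative inner (y - x) D) (at 0)"
    unfolding \<gamma>_def by (rule DERIV_along_line) (simp add: deriv)
  ultimately have "\<gamma> 1 - \<gamma> 0 \<ge> inner (y - x) D * (1 - 0)"
    by (intro convex_on_imp_above_tangent[where A = UNIV]) auto
  then show ?thesis
    by (simp add: \<gamma>_def inner_commute)
qed

lemma bregman_ge_strongly_convex:
  assumes "strongly_convex_mod \<rho> f" and "GDERIV f x :> g x"
  shows "\<rho> / 2 * (norm (y - x))\<^sup>2 \<le> bregman f g y x"
proof -
  have "convex_on UNIV (\<lambda>x. f x - \<rho> / 2 * inner x x)"
    using assms(1) by (simp add: strongly_convex_mod_def power2_norm_eq_inner)
  moreover have "GDERIV (\<lambda>x. f x - \<rho> / 2 * inner x x) x :> g x - \<rho> *\<^sub>R x"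
    using assms(2) unfolding gderiv_def
    by (auto intro!: derivative_eq_intros simp: fun_eq_iff inner_diff_right inner_commute algebra_simps)
  ultimately show ?thesis
    by (auto dest!: convex_on_gradient_inequality[where y = y] simp: bregman_def
        power2_norm_eq_inner inner_diff_left inner_diff_right inner_commute algebra_simps)
qed

lemma lipschitz_gradient_lower_bound:
  assumes deriv: "\<And>u. GDERIV f u :> g u" and lip: "L-lipschitz_on UNIV g"
  shows "f x + inner (g x) (y - x) - L / 2 * (norm (y - x))\<^sup>2 \<le> f y"
proof -
  define d where "d = y - x"
  define \<gamma> where "\<gamma> t = f (x + t *\<^sub>R d) - t * inner (g x) d + L / 2 * t\<^sup>2 * (norm d)\<^sup>2" for t
  have "\<gamma> 0 \<le> \<gamma> 1"
  proof (rule DERIV_nonneg_imp_nondecreasing[of 0 1])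
    fix t :: real
    assume t: "0 \<le> t" "t \<le> 1"
    have "(\<gamma> has_real_derivative inner d (g (x + t *\<^sub>R d)) - inner (g x) d + L * t * (norm d)\<^sup>2) (at t)"
      unfolding \<gamma>_def by (auto intro!: derivative_eq_intros DERIV_along_line deriv)
    moreover have "0 \<le> inner d (g (x + t *\<^sub>R d)) - inner (g x) d + L * t * (norm d)\<^sup>2"
    proof -
      have "inner d (g x - g (x + t *\<^sub>R d)) \<le> norm d * norm (g x - g (x + t *\<^sub>R d))"
        by (rule norm_cauchy_schwarz)
      also have "\<dots> \<le> norm d * (L * (t * norm d))"
        using lipschitz_onD[OF lip, of x "x + t *\<^sub>R d"] t by (intro mult_left_mono) (auto simp: dist_norm)
      finally show ?thesis
        by (simp add: inner_diff_right inner_commute power2_eq_square mult_ac)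
    qed
    ultimately show "\<exists>D. (\<gamma> has_real_derivative D) (at t) \<and> 0 \<le> D"
      by blast
  qed simp
  then show ?thesis
    by (simp add: \<gamma>_def d_def)
qed

lemma inertial_cross_term_le:
  assumes lip: "L-lipschitz_on UNIV G" and "0 \<le> \<beta>" "0 \<le> c"
  shows "inner d (G (x + \<beta> *\<^sub>R m) - G x) + c * inner d m
    \<le> (L * \<beta> + c) / 2 * ((norm d)\<^sup>2 + (norm m)\<^sup>2)"
proof -
  define P where "P = L * \<beta> + c"
  have "inner d (G (x + \<beta> *\<^sub>R m) - G x) \<le> norm d * norm (G (x + \<beta> *\<^sub>R m) - G x)"
    by (rule norm_cauchy_schwarz)
  also have "\<dots> \<le> norm d * (L * (\<beta> * norm m))"
    using lipschitz_onD[OF lip, of "x + \<beta> *\<^sub>R m" x] \<open>0 \<le> \<beta>\<close>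
    by (intro mult_left_mono) (auto simp: dist_norm)
  finally have "inner d (G (x + \<beta> *\<^sub>R m) - G x) \<le> L * \<beta> * (norm d * norm m)"
    by (simp add: mult_ac)
  moreover have "c * inner d m \<le> c * (norm d * norm m)"
    using \<open>0 \<le> c\<close> by (intro mult_left_mono norm_cauchy_schwarz)
  ultimately have "inner d (G (x + \<beta> *\<^sub>R m) - G x) + c * inner d m \<le> P * (norm d * norm m)"
    by (simp add: P_def distrib_right)
  also have "\<dots> \<le> P * (((norm d)\<^sup>2 + (norm m)\<^sup>2) / 2)"
    using sum_squares_bound[of "norm d" "norm m"] lipschitz_on_nonneg[OF lip] assms(2,3)
    by (intro mult_left_mono) (auto simp: P_def)
  finally show ?thesis
    by (simp add: P_def)
qed

lemma bregman_prox_le_center: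
  assumes "x' \<in> bregman_prox g \<mu> \<psi> g\<psi> u v"
  shows "g x' + ereal (inner x' v + \<mu> * bregman \<psi> g\<psi> x' u) \<le> g u + ereal (inner u v)"
  using assms by (auto simp: bregman_prox_def bregman_def dest: spec[of _ u])

lemma inertial_bregman_step_descent:
  fixes \<theta> :: "'c::real_inner \<Rightarrow> ereal"
  assumes step: "xp \<in> bregman_prox (\<lambda>u. \<theta> u + ereal (f u)) \<tau> \<psi> g\<psi> x t"
    and kernel: "strongly_convex_mod \<rho> \<psi>" "GDERIV \<psi> x :> g\<psi> x"
    and smooth: "\<And>u. GDERIV g u :> G u" "L-lipschitz_on UNIV G"
    and step_size: "\<tau> * (\<rho> - \<alpha>) = (1 + \<epsilon>) * \<delta> + (1 + \<beta>) * L"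
      "L * \<beta> + \<tau> * \<alpha> \<le> (1 - \<epsilon>) * \<delta>" "0 \<le> \<tau>" "0 \<le> \<alpha>" "0 \<le> \<beta>"
    and inertia: "y = x + \<alpha> *\<^sub>R (x - xm)" "z = x + \<beta> *\<^sub>R (x - xm)" "t = - G z - \<tau> *\<^sub>R (y - x)"
  shows "\<theta> xp + ereal (f xp - g xp + \<delta> / 2 * (norm (xp - x))\<^sup>2
           + \<epsilon> * \<delta> / 2 * ((norm (xp - x))\<^sup>2 + (norm (x - xm))\<^sup>2))
     \<le> \<theta> x + ereal (f x - g x + \<delta> / 2 * (norm (x - xm))\<^sup>2)"
proof -
  have prox: "\<theta> xp + ereal (f xp) + ereal (inner xp t + \<tau> * bregman \<psi> g\<psi> xp x)
      \<le> \<theta> x + ereal (f x) + ereal (inner x t)"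
    using bregman_prox_le_center[OF step] by (simp add: add.assoc)
  consider "\<theta> xp = -\<infinity> \<or> \<theta> x = \<infinity>" | T1 T0 where "\<theta> xp = ereal T1" "\<theta> x = ereal T0"
    using prox by (cases "\<theta> xp"; cases "\<theta> x") auto
  then show ?thesis
  proof cases
    case 1
    then show ?thesis by auto
  next
    case (2 T1 T0)
    define d m where "d = xp - x" and "m = x - xm"
    define a b where "a = (norm d)\<^sup>2" and "b = (norm m)\<^sup>2"
    define P where "P = L * \<beta> + \<tau> * \<alpha>"
    have z: "z = x + \<beta> *\<^sub>R m"
      by (simp add: inertia(2) m_def)
    have "T1 + f xp + \<tau> * bregman \<psi> g\<psi> xp x \<le> T0 + f x - inner d t"
      using prox 2 by (simp add: d_def inner_diff_left)
    moreover have "inner d t = - inner d (G z) - \<tau> * \<alpha> * inner d m"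
      by (simp add: inertia(1,3) m_def inner_diff_right)
    moreover have "g x + inner d (G x) - L / 2 * a \<le> g xp"
      using lipschitz_gradient_lower_bound[OF smooth, of x xp] by (simp add: a_def d_def inner_commute)
    ultimately have "T1 + f xp - g xp - (T0 + f x - g x)
        \<le> inner d (G z) - inner d (G x) + \<tau> * \<alpha> * inner d m - \<tau> * bregman \<psi> g\<psi> xp x + L / 2 * a"
      by linarith
    also have "\<dots> \<le> P / 2 * (a + b) - \<tau> * (\<rho> / 2 * a) + L / 2 * a"
    proof -
      have "inner d (G z) - inner d (G x) + \<tau> * \<alpha> * inner d m \<le> P / 2 * (a + b)"
        using inertial_cross_term_le[OF smooth(2)] step_size(3-5)
        by (simp add: z P_def a_def b_def inner_diff_right)
      moreover have "\<tau> * (\<rho> / 2 * a) \<le> \<tau> * bregman \<psi> g\<psi> xp x"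
        using bregman_ge_strongly_convex[where g = g\<psi>, OF kernel] \<open>0 \<le> \<tau>\<close>
        by (intro mult_left_mono) (auto simp: a_def d_def)
      ultimately show ?thesis
        by linarith
    qed
    also have "\<dots> = - (1 + \<epsilon>) * \<delta> / 2 * a + P / 2 * b"
    proof -
      from step_size(1) have "\<tau> * \<rho> * a = ((1 + \<epsilon>) * \<delta> + (1 + \<beta>) * L + \<tau> * \<alpha>) * a"
        by (simp add: algebra_simps)
      then show ?thesis
        by (simp add: P_def field_simps)
    qed
    also have "\<dots> \<le> - (1 + \<epsilon>) * \<delta> / 2 * a + (1 - \<epsilon>) * \<delta> / 2 * b"
      using step_size(2) by (auto intro!: mult_right_mono simp: P_def b_def)
    finally show ?thesis
      using 2 by (simp add: a_def b_def d_def m_def field_simps)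
  qed
qed

lemma inertial_step_size_conditions:
  fixes \<rho> \<epsilon> \<alpha> \<alpha>b \<beta> \<beta>b L lp \<delta> \<tau> :: real
  assumes "0 < \<rho>" "0 < \<epsilon>" "0 \<le> \<alpha>" "\<alpha> \<le> \<alpha>b" "\<alpha>b < (1 - \<epsilon>) * \<rho> / 2"
    and "0 \<le> \<beta>" "\<beta> \<le> \<beta>b" "0 < \<beta>b" "0 \<le> L" "L \<le> lp" "0 < lp"
    and \<delta>: "\<delta> = (\<alpha>b + \<beta>b * \<rho>) / ((1 - \<epsilon>) * \<rho> - 2 * \<alpha>b) * lp"
    and \<tau>: "\<tau> = ((1 + \<epsilon>) * \<delta> + (1 + \<beta>) * L) / (\<rho> - \<alpha>)"
  shows "0 < \<delta>" "\<tau> * (\<rho> - \<alpha>) = (1 + \<epsilon>) * \<delta> + (1 + \<beta>) * L"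
    "L * \<beta> + \<tau> * \<alpha> \<le> (1 - \<epsilon>) * \<delta>" "0 \<le> \<tau>"
proof -
  have gap: "0 < (1 - \<epsilon>) * \<rho> - 2 * \<alpha>b"
    using assms(5) by simp
  have "\<epsilon> * \<rho> > 0"
    using assms(1,2) by simp
  then have "\<rho> - \<alpha> > 0"
    using assms(3-5) by (simp add: algebra_simps)
  show \<delta>_pos: "0 < \<delta>"
    unfolding \<delta> using assms(1,3,4,8,11) gap by (intro mult_pos_pos divide_pos_pos add_nonneg_pos) auto
  show \<tau>_eq: "\<tau> * (\<rho> - \<alpha>) = (1 + \<epsilon>) * \<delta> + (1 + \<beta>) * L"
    using \<tau> \<open>\<rho> - \<alpha> > 0\<close> by simp
  show "0 \<le> \<tau>"
    unfolding \<tau> using \<open>\<rho> - \<alpha> > 0\<close> \<delta>_pos assms(2,6,9) by simp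
  have "L * (\<beta> * \<rho> + \<alpha>) \<le> lp * (\<beta>b * \<rho> + \<alpha>b)"
    using assms by (intro mult_mono add_mono mult_right_mono) auto
  also have "\<dots> = \<delta> * ((1 - \<epsilon>) * \<rho> - 2 * \<alpha>b)"
    unfolding \<delta> using gap by simp
  also have "\<dots> \<le> \<delta> * ((1 - \<epsilon>) * \<rho> - 2 * \<alpha>)"
    using \<delta>_pos assms(4) by simp
  finally have "L * (\<beta> * \<rho> + \<alpha>) \<le> \<delta> * ((1 - \<epsilon>) * \<rho> - 2 * \<alpha>)" .
  then have "(L * \<beta> + \<tau> * \<alpha>) * (\<rho> - \<alpha>) \<le> (1 - \<epsilon>) * \<delta> * (\<rho> - \<alpha>)"
    using \<tau>_eq by (simp add: algebra_simps)
  then show "L * \<beta> + \<tau> * \<alpha> \<le> (1 - \<epsilon>) * \<delta>"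
    using \<open>\<rho> - \<alpha> > 0\<close> by simp
qed

lemma Theta_sufficient_decrease:
  fixes \<theta>1 :: "'a::real_normed_vector \<Rightarrow> ereal" and \<theta>2 :: "'b::real_normed_vector \<Rightarrow> ereal"
  assumes proper: "\<And>x. \<theta>1 x \<noteq> -\<infinity>" "\<And>y. \<theta>2 y \<noteq> -\<infinity>"
    and step1: "\<theta>1 x1' + ereal (h (x1', x2) + \<delta>1 / 2 * (norm (x1' - x1))\<^sup>2
        + c1 * ((norm (x1' - x1))\<^sup>2 + (norm (x1 - x1m))\<^sup>2))
      \<le> \<theta>1 x1 + ereal (h (x1, x2) + \<delta>1 / 2 * (norm (x1 - x1m))\<^sup>2)"
    and step2: "\<theta>2 x2' + ereal (h (x1', x2') + \<delta>2 / 2 * (norm (x2' - x2))\<^sup>2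
        + c2 * ((norm (x2' - x2))\<^sup>2 + (norm (x2 - x2m))\<^sup>2))
      \<le> \<theta>2 x2 + ereal (h (x1', x2) + \<delta>2 / 2 * (norm (x2 - x2m))\<^sup>2)"
    and "\<delta> \<le> c1" "\<delta> \<le> c2"
  shows "Theta (Phi \<theta>1 \<theta>2 h) \<delta>1 \<delta>2 ((x1', x2'), (x1, x2))
      + ereal (\<delta> * (norm (((x1', x2'), (x1, x2)) - ((x1, x2), (x1m, x2m))))\<^sup>2)
    \<le> Theta (Phi \<theta>1 \<theta>2 h) \<delta>1 \<delta>2 ((x1, x2), (x1m, x2m))"
proof (cases "\<theta>1 x1 = \<infinity> \<or> \<theta>2 x2 = \<infinity>")
  case True
  then show ?thesis
    using proper by (auto simp: Theta_def Phi_def)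
next
  case False
  then obtain T1 T2 where T: "\<theta>1 x1 = ereal T1" "\<theta>2 x2 = ereal T2"
    using proper by (metis ereal_cases)
  moreover obtain T1' where "\<theta>1 x1' = ereal T1'"
    using step1 proper(1)[of x1'] T by (cases "\<theta>1 x1'") auto
  moreover obtain T2' where "\<theta>2 x2' = ereal T2'"
    using step2 proper(2)[of x2'] T by (cases "\<theta>2 x2'") auto
  moreover define a1 a2 b1 b2 where "a1 = (norm (x1' - x1))\<^sup>2" and "a2 = (norm (x2' - x2))\<^sup>2"
    and "b1 = (norm (x1 - x1m))\<^sup>2" and "b2 = (norm (x2 - x2m))\<^sup>2"
  moreover have "\<delta> * (a1 + a2 + (b1 + b2)) \<le> c1 * (a1 + b1) + c2 * (a2 + b2)"
  proof -
    have "\<delta> * (a1 + b1) \<le> c1 * (a1 + b1)" "\<delta> * (a2 + b2) \<le> c2 * (a2 + b2)"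
      using assms(5,6) by (auto intro!: mult_right_mono simp: a1_def a2_def b1_def b2_def)
    then show ?thesis
      by (simp add: algebra_simps)
  qed
  ultimately show ?thesis
    using step1 step2 by (simp add: Theta_def Phi_def norm_Pair)
qed

theorem lemma1:
  fixes \<theta>1 :: "'a::euclidean_space \<Rightarrow> ereal" and \<theta>2 :: "'b::euclidean_space \<Rightarrow> ereal"
    and hp hm :: "'a \<times> 'b \<Rightarrow> real" and Gp Gm :: "'a \<times> 'b \<Rightarrow> 'a \<times> 'b"
    and \<psi> :: "nat \<Rightarrow> 'a \<Rightarrow> real" and g\<psi> :: "nat \<Rightarrow> 'a \<Rightarrow> 'a"
    and \<phi> :: "nat \<Rightarrow> 'b \<Rightarrow> real" and g\<phi> :: "nat \<Rightarrow> 'b \<Rightarrow> 'b"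
    and \<rho>1 \<rho>2 :: real
    and L1 :: "'b \<Rightarrow> real" and L2 :: "'a \<Rightarrow> real"
    and lam1m lam1p lam2m lam2p :: real
    and \<epsilon> \<alpha>b1 \<alpha>b2 \<beta>b1 \<beta>b2 \<delta>1 \<delta>2 \<delta> :: real
    and \<alpha>1 \<alpha>2 \<beta>1 \<beta>2 \<tau>1 \<tau>2 :: "nat \<Rightarrow> real"
    and x1 y1 z1 t1 :: "nat \<Rightarrow> 'a" and x2 y2 z2 t2 :: "nat \<Rightarrow> 'b"
  \<comment> \<open>smooth parts h = h^+ - h^-, continuously differentiable with gradients Gp, Gm\<close>
  assumes hp_C1: "C1_with_grad hp Gp" and hm_C1: "C1_with_grad hm Gm"
  \<comment> \<open>kernels: strongly convex (moduli at least rho1, rho2), continuously differentiable\<close>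
    and rho_pos: "\<rho>1 > 0" "\<rho>2 > 0"
    and psi_C1: "\<And>k. C1_with_grad (\<psi> k) (g\<psi> k)"
    and phi_C1: "\<And>k. C1_with_grad (\<phi> k) (g\<phi> k)"
    and psi_sc: "\<And>k. strongly_convex_mod \<rho>1 (\<psi> k)"
    and phi_sc: "\<And>k. strongly_convex_mod \<rho>2 (\<phi> k)"
  \<comment> \<open>Assumption A1\<close>
    and A1: "proper_fun \<theta>1" "lsc_fun \<theta>1" "proper_fun \<theta>2" "lsc_fun \<theta>2"
      "\<exists>m. \<forall>z. Phi \<theta>1 \<theta>2 (\<lambda>z. hp z - hm z) z \<ge> ereal m"
  \<comment> \<open>Assumption A2\<close>
    and A2i: "\<And>v. (L1 v)-lipschitz_on UNIV (\<lambda>u. fst (Gm (u, v)))"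
      "\<And>u. (L2 u)-lipschitz_on UNIV (\<lambda>v. snd (Gm (u, v)))"
    and A2ii: "lam1m > 0" "lam1p > 0" "lam2m > 0" "lam2p > 0"
      "\<And>k. lam1m \<le> L1 (x2 k)" "\<And>k. L1 (x2 k) \<le> lam1p"
      "\<And>k. lam2m \<le> L2 (x1 k)" "\<And>k. L2 (x1 k) \<le> lam2p"
    and A2iii: "\<And>S. bounded S \<Longrightarrow> \<exists>C. C-lipschitz_on S (\<lambda>z. Gp z - Gm z)"
  \<comment> \<open>Assumption A3\<close>
    and eps_pos: "\<epsilon> > 0"
    and A3_alpha: "0 < \<alpha>b1" "\<alpha>b1 < (1 - \<epsilon>) * \<rho>1 / 2" "0 < \<alpha>b2" "\<alpha>b2 < (1 - \<epsilon>) * \<rho>2 / 2"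
      "\<And>k. 0 \<le> \<alpha>1 k \<and> \<alpha>1 k \<le> \<alpha>b1" "\<And>k. 0 \<le> \<alpha>2 k \<and> \<alpha>2 k \<le> \<alpha>b2"
    and A3_beta: "0 < \<beta>b1" "0 < \<beta>b2"
      "\<And>k. 0 \<le> \<beta>1 k \<and> \<beta>1 k \<le> \<beta>b1" "\<And>k. 0 \<le> \<beta>2 k \<and> \<beta>2 k \<le> \<beta>b2"
    and delta1_def: "\<delta>1 = (\<alpha>b1 + \<beta>b1 * \<rho>1) / ((1 - \<epsilon>) * \<rho>1 - 2 * \<alpha>b1) * lam1p"
    and delta2_def: "\<delta>2 = (\<alpha>b2 + \<beta>b2 * \<rho>2) / ((1 - \<epsilon>) * \<rho>2 - 2 * \<alpha>b2) * lam2p"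
    and tau1_def: "\<And>k. \<tau>1 k = ((1 + \<epsilon>) * \<delta>1 + (1 + \<beta>1 k) * L1 (x2 k)) / (\<rho>1 - \<alpha>1 k)"
    and tau2_def: "\<And>k. \<tau>2 k = ((1 + \<epsilon>) * \<delta>2 + (1 + \<beta>2 k) * L2 (x1 (Suc k))) / (\<rho>2 - \<alpha>2 k)"
  \<comment> \<open>the algorithm; x^{-1} := x^0 is encoded by natural-number subtraction (0 - 1 = 0)\<close>
    and y1_def: "\<And>k. y1 k = x1 k + \<alpha>1 k *\<^sub>R (x1 k - x1 (k - 1))"
    and z1_def: "\<And>k. z1 k = x1 k + \<beta>1 k *\<^sub>R (x1 k - x1 (k - 1))"
    and t1_def: "\<And>k. t1 k = - fst (Gm (z1 k, x2 k)) - \<tau>1 k *\<^sub>R (y1 k - x1 k)"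
    and x1_step: "\<And>k. x1 (Suc k) \<in>
       bregman_prox (\<lambda>u. \<theta>1 u + ereal (hp (u, x2 k))) (\<tau>1 k) (\<psi> k) (g\<psi> k) (x1 k) (t1 k)"
    and y2_def: "\<And>k. y2 k = x2 k + \<alpha>2 k *\<^sub>R (x2 k - x2 (k - 1))"
    and z2_def: "\<And>k. z2 k = x2 k + \<beta>2 k *\<^sub>R (x2 k - x2 (k - 1))"
    and t2_def: "\<And>k. t2 k = - snd (Gm (x1 (Suc k), z2 k)) - \<tau>2 k *\<^sub>R (y2 k - x2 k)"
    and x2_step: "\<And>k. x2 (Suc k) \<in>
       bregman_prox (\<lambda>v. \<theta>2 v + ereal (hp (x1 (Suc k), v))) (\<tau>2 k) (\<phi> k) (g\<phi> k) (x2 k) (t2 k)"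
    and delta_def: "\<delta> = \<epsilon> / 2 * min \<delta>1 \<delta>2"
  shows "\<delta> > 0 \<and>
    decseq (\<lambda>k. Theta (Phi \<theta>1 \<theta>2 (\<lambda>z. hp z - hm z)) \<delta>1 \<delta>2
                   ((x1 k, x2 k), (x1 (k - 1), x2 (k - 1)))) \<and>
    (\<forall>k. Theta (Phi \<theta>1 \<theta>2 (\<lambda>z. hp z - hm z)) \<delta>1 \<delta>2
             ((x1 (Suc k), x2 (Suc k)), (x1 k, x2 k))
         + ereal (\<delta> * (norm (((x1 (Suc k), x2 (Suc k)), (x1 k, x2 k))
                            - ((x1 k, x2 k), (x1 (k - 1), x2 (k - 1)))))\<^sup>2)
         \<le> Theta (Phi \<theta>1 \<theta>2 (\<lambda>z. hp z - hm z)) \<delta>1 \<delta>2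
             ((x1 k, x2 k), (x1 (k - 1), x2 (k - 1))))"
proof -
  let ?\<Phi> = "Phi \<theta>1 \<theta>2 (\<lambda>z. hp z - hm z)"
  let ?\<Theta> = "\<lambda>k. Theta ?\<Phi> \<delta>1 \<delta>2 ((x1 k, x2 k), (x1 (k - 1), x2 (k - 1)))"
  have \<theta>_proper: "\<And>x. \<theta>1 x \<noteq> -\<infinity>" "\<And>y. \<theta>2 y \<noteq> -\<infinity>"
    using A1(1,3) by (auto simp: proper_fun_def)
  have L_nonneg: "\<And>k. 0 \<le> L1 (x2 k)" "\<And>k. 0 \<le> L2 (x1 k)"
    using A2ii by (meson less_le_trans less_imp_le)+
  note size1 = inertial_step_size_conditions[OF rho_pos(1) eps_pos conjunct1[OF A3_alpha(5)]
      conjunct2[OF A3_alpha(5)] A3_alpha(2) conjunct1[OF A3_beta(3)] conjunct2[OF A3_beta(3)]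
      A3_beta(1) L_nonneg(1) A2ii(6) A2ii(2) delta1_def tau1_def]
  note size2 = inertial_step_size_conditions[OF rho_pos(2) eps_pos conjunct1[OF A3_alpha(6)]
      conjunct2[OF A3_alpha(6)] A3_alpha(4) conjunct1[OF A3_beta(4)] conjunct2[OF A3_beta(4)]
      A3_beta(2) L_nonneg(2) A2ii(8) A2ii(4) delta2_def tau2_def]
  have \<delta>_le: "\<delta> \<le> \<epsilon> * \<delta>1 / 2" "\<delta> \<le> \<epsilon> * \<delta>2 / 2"
    using eps_pos by (auto simp: delta_def intro: mult_left_mono)
  have \<delta>_pos: "\<delta> > 0"
    using size1(1) size2(1) eps_pos by (simp add: delta_def)
  have descent: "Theta ?\<Phi> \<delta>1 \<delta>2 ((x1 (Suc k), x2 (Suc k)), (x1 k, x2 k))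
      + ereal (\<delta> * (norm (((x1 (Suc k), x2 (Suc k)), (x1 k, x2 k))
                          - ((x1 k, x2 k), (x1 (k - 1), x2 (k - 1)))))\<^sup>2)
      \<le> ?\<Theta> k" for k
  proof -
    note step1 = inertial_bregman_step_descent[OF x1_step[of k] psi_sc[of k]
        C1_with_grad_GDERIV[OF psi_C1[of k]] GDERIV_partial_fst[OF C1_with_grad_GDERIV[OF hm_C1]]
        A2i(1) size1(2-4)[of k] conjunct1[OF A3_alpha(5)[of k]] conjunct1[OF A3_beta(3)[of k]]
        y1_def z1_def t1_def]
    note step2 = inertial_bregman_step_descent[OF x2_step[of k] phi_sc[of k]
        C1_with_grad_GDERIV[OF phi_C1[of k]] GDERIV_partial_snd[OF C1_with_grad_GDERIV[OF hm_C1]]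
        A2i(2) size2(2-4)[of k] conjunct1[OF A3_alpha(6)[of k]] conjunct1[OF A3_beta(4)[of k]]
        y2_def z2_def t2_def]
    show ?thesis
      using Theta_sufficient_decrease[where h = "\<lambda>z. hp z - hm z", OF \<theta>_proper step1 step2 \<delta>_le] .
  qed
  have "decseq ?\<Theta>"
  proof (rule decseq_SucI)
    show "?\<Theta> (Suc k) \<le> ?\<Theta> k" for k
      using order_trans[OF ereal_le_add_self descent[of k]] \<delta>_pos by simp
  qed
  then show ?thesis
    using \<delta>_pos descent by blast
qed

end
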